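(* If $2 \leq a < b$, then $I_{a,b} \leq a^{a+b-2}$.
   Context: $K_{a,b}$ is the complete bipartite graph with partite sets of sizes $a$ and $b$. $I_{a,b}$ denotes the number of isomorphism classes (as unlabeled graphs) of spanning trees of $K_{a,b}$. *)

theory Defs
  imports Main
begin

definition simple_graph :: "'a set \<Rightarrow> 'a set set \<Rightarrow> bool" where
  "simple_graph V E \<longleftrightarrow> (\<forall>e\<in>E. \<exists>u v. u \<in> V \<and> v \<in> V \<and> u \<noteq> v \<and> e = {u, v})"

definition adj :: "'a set set \<Rightarrow> 'a \<Rightarrow> 'a \<Rightarrow> bool" where
  "adj E u v \<longleftrightarrow> {u, v} \<in> E"

definition connected_graph :: "'a set \<Rightarrow> 'a set set \<Rightarrow> bool" where
  "connected_graph V E \<longleftrightarrow> (\<forall>u\<in>V. \<forall>v\<in>V. (adj E)\<^sup>*\<^sup>* u v)"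

definition has_cycle :: "'a set \<Rightarrow> 'a set set \<Rightarrow> bool" where
  "has_cycle V E \<longleftrightarrow> (\<exists>xs. length xs \<ge> 3 \<and> distinct xs \<and> set xs \<subseteq> V \<and>
      (\<forall>i. i + 1 < length xs \<longrightarrow> {xs ! i, xs ! (i + 1)} \<in> E) \<and> {last xs, hd xs} \<in> E)"

definition is_tree :: "'a set \<Rightarrow> 'a set set \<Rightarrow> bool" where
  "is_tree V E \<longleftrightarrow> V \<noteq> {} \<and> simple_graph V E \<and> connected_graph V E \<and> \<not> has_cycle V E"

definition graph_iso :: "'a set \<Rightarrow> 'a set set \<Rightarrow> 'b set \<Rightarrow> 'b set set \<Rightarrow> bool" where
  "graph_iso V1 E1 V2 E2 \<longleftrightarrow> (\<exists>f. bij_betw f V1 V2 \<and>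
      (\<forall>u\<in>V1. \<forall>v\<in>V1. {u, v} \<in> E1 \<longleftrightarrow> {f u, f v} \<in> E2))"

definition Kab_verts :: "nat \<Rightarrow> nat \<Rightarrow> (nat + nat) set" where
  "Kab_verts a b = Inl ` {..<a} \<union> Inr ` {..<b}"

definition Kab_edges :: "nat \<Rightarrow> nat \<Rightarrow> (nat + nat) set set" where
  "Kab_edges a b = {{Inl i, Inr j} | i j. i < a \<and> j < b}"

definition spanning_trees_Kab :: "nat \<Rightarrow> nat \<Rightarrow> (nat + nat) set set set" where
  "spanning_trees_Kab a b = {T. T \<subseteq> Kab_edges a b \<and> is_tree (Kab_verts a b) T}"

definition tree_iso_rel :: "nat \<Rightarrow> nat \<Rightarrow> ((nat + nat) set set \<times> (nat + nat) set set) set" where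
  "tree_iso_rel a b = {(T1, T2). T1 \<in> spanning_trees_Kab a b \<and> T2 \<in> spanning_trees_Kab a b \<and>
      graph_iso (Kab_verts a b) T1 (Kab_verts a b) T2}"

definition I_count :: "nat \<Rightarrow> nat \<Rightarrow> nat" where
  "I_count a b = card (spanning_trees_Kab a b // tree_iso_rel a b)"

end

(* Root a spanning tree of K_{a,b} at the left vertex 0. Then it is the set of edges joining
   every other vertex to its parent: left vertex i (1 <= i < a) to a right vertex G i, and
   right vertex j to a left vertex H j. Permuting the right side yields an isomorphic tree,
   and when a <= b the right vertices can be renumbered so that the parent of left vertex i
   becomes one of the right vertices 0, ..., i - 1: number the value G i by the position i - 1
   of its first occurrence. Hence every isomorphism class contains a tree with G i < i and
   H j < a, and there are at most (a - 1)! * a^b of those, which is at most a^(a + b - 2). *)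

theory Submission
  imports Defs "HOL-Library.FuncSet"
begin

definition walk :: "'a set set \<Rightarrow> 'a list \<Rightarrow> bool" where
  "walk E xs \<longleftrightarrow> (\<forall>i. i + 1 < length xs \<longrightarrow> {xs ! i, xs ! (i + 1)} \<in> E)"

lemma has_cycle_iff_walk:
  "has_cycle V E \<longleftrightarrow> (\<exists>xs. 3 \<le> length xs \<and> distinct xs \<and> set xs \<subseteq> V \<and> walk E xs \<and>
      {last xs, hd xs} \<in> E)"
  unfolding has_cycle_def walk_def by blast

lemma walk_take: "walk E xs \<Longrightarrow> walk E (take k xs)"
  unfolding walk_def by auto

lemma walk_snoc:
  assumes "walk E xs" "xs \<noteq> []" "{last xs, z} \<in> E"
  shows "walk E (xs @ [z])"
  unfolding walk_def
proof (intro allI impI)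
  fix i assume i: "i + 1 < length (xs @ [z])"
  show "{(xs @ [z]) ! i, (xs @ [z]) ! (i + 1)} \<in> E"
  proof (cases "i + 1 < length xs")
    case True
    then show ?thesis using assms(1) by (simp add: walk_def nth_append)
  next
    case False
    then have "i = length xs - 1" using i by simp
    then show ?thesis using assms(2,3) by (simp add: nth_append last_conv_nth)
  qed
qed

lemma rtranclp_adj_imp_path:
  assumes "(adj E)\<^sup>*\<^sup>* u v"
  shows "\<exists>xs. xs \<noteq> [] \<and> hd xs = u \<and> last xs = v \<and> distinct xs \<and> walk E xs \<and>
           set xs \<subseteq> insert u (\<Union>E)"
  using assms
proof (induction rule: rtranclp_induct)
  case base
  show ?case by (intro exI[of _ "[u]"]) (simp add: walk_def)
next
  case (step y z)
  then obtain xs where xs: "xs \<noteq> []" "hd xs = u" "last xs = y" "distinct xs" "walk E xs"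
    "set xs \<subseteq> insert u (\<Union>E)" by blast
  have yz: "{y, z} \<in> E" using step.hyps(2) by (simp add: adj_def)
  show ?case
  proof (cases "z \<in> set xs")
    case True
    then obtain k where k: "k < length xs" "xs ! k = z" by (auto simp: in_set_conv_nth)
    let ?ys = "take (k + 1) xs"
    have "?ys \<noteq> []" "hd ?ys = u" "distinct ?ys" using xs(1,2,4) by (simp_all add: hd_take)
    moreover have "last ?ys = z" using k by (simp add: take_Suc_conv_app_nth)
    moreover have "set ?ys \<subseteq> insert u (\<Union>E)" using set_take_subset xs(6) by (rule order_trans)
    moreover have "walk E ?ys" using xs(5) by (rule walk_take)
    ultimately show ?thesis by blast
  next
    case False
    have "set (xs @ [z]) \<subseteq> insert u (\<Union>E)" using xs(6) yz by auto
    moreover have "walk E (xs @ [z])" using walk_snoc[OF xs(5,1)] xs(3) yz by simp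
    ultimately show ?thesis using xs(1,2,4) False by (intro exI[of _ "xs @ [z]"]) simp
  qed
qed

lemma symp_adj: "symp (adj E)"
  unfolding symp_def adj_def by (metis insert_commute)

lemma simple_graph_edge_subset:
  assumes "simple_graph V E" "e \<in> E"
  shows "e \<subseteq> V"
proof -
  obtain u v where "u \<in> V" "v \<in> V" "e = {u, v}" using assms unfolding simple_graph_def by blast
  then show ?thesis by simp
qed

text \<open>A path from x to y avoiding the edge {x, y} would close a cycle with it.\<close>
lemma acyclic_edge_is_bridge:
  assumes sg: "simple_graph V T" and acyclic: "\<not> has_cycle V T" and xy: "{x, y} \<in> T"
  shows "\<not> (adj (T - {{x, y}}))\<^sup>*\<^sup>* x y"
proof
  assume "(adj (T - {{x, y}}))\<^sup>*\<^sup>* x y"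
  from rtranclp_adj_imp_path[OF this] obtain xs
    where xs: "xs \<noteq> []" "hd xs = x" "last xs = y" "distinct xs" "walk (T - {{x, y}}) xs"
      "set xs \<subseteq> insert x (\<Union>(T - {{x, y}}))"
    by blast
  have "x \<noteq> y" using sg xy unfolding simple_graph_def by (auto simp: doubleton_eq_iff)
  have "\<Union>T \<subseteq> V" using simple_graph_edge_subset[OF sg] by (rule Union_least)
  then have "x \<in> V" using xy by blast
  have "length xs \<noteq> 1" using xs(1-3) \<open>x \<noteq> y\<close> by (cases xs) auto
  moreover have "length xs \<noteq> 2"
  proof
    assume "length xs = 2"
    then have "{xs ! 0, xs ! 1} \<in> T - {{x, y}}" using xs(5) unfolding walk_def by auto
    moreover have "xs ! 0 = x" "xs ! 1 = y" using xs(1-3) \<open>length xs = 2\<close>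
      by (auto simp: hd_conv_nth last_conv_nth)
    ultimately show False by simp
  qed
  moreover have "length xs \<noteq> 0" using xs(1) by simp
  ultimately have "3 \<le> length xs" by linarith
  moreover have "set xs \<subseteq> V" using xs(6) \<open>x \<in> V\<close> \<open>\<Union>T \<subseteq> V\<close> by auto
  moreover have "walk T xs" using xs(5) unfolding walk_def by blast
  moreover have "{last xs, hd xs} \<in> T" using xy xs(2,3) by (simp add: insert_commute)
  ultimately show False using acyclic xs(4) unfolding has_cycle_iff_walk by blast
qed

lemma connected_graph_ex_parent:
  assumes sg: "simple_graph V E" and conn: "connected_graph V E" and r: "r \<in> V"
  shows "\<exists>p (d :: 'a \<Rightarrow> nat). \<forall>v\<in>V - {r}. p v \<in> V \<and> {v, p v} \<in> E \<and> d (p v) < d v"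
proof -
  define d where "d v = (LEAST n. (adj E ^^ n) r v)" for v
  have "\<forall>v\<in>V - {r}. \<exists>u. u \<in> V \<and> {v, u} \<in> E \<and> d u < d v"
  proof
    fix v assume v: "v \<in> V - {r}"
    have "(adj E)\<^sup>*\<^sup>* r v" using conn r v unfolding connected_graph_def by blast
    then obtain n where "(adj E ^^ n) r v" by (metis rtranclp_imp_relpowp)
    then have walk_d: "(adj E ^^ d v) r v" unfolding d_def by (rule LeastI)
    then obtain m where m: "d v = Suc m" using v by (cases "d v") auto
    then obtain u where u: "(adj E ^^ m) r u" "adj E u v"
      using walk_d by (auto elim: relpowp_Suc_E)
    have "d u \<le> m" unfolding d_def using u(1) by (rule Least_le)
    moreover have "{v, u} \<in> E" using u(2) by (simp add: adj_def insert_commute)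
    moreover have "u \<in> V" using simple_graph_edge_subset[OF sg \<open>{v, u} \<in> E\<close>] by simp
    ultimately show "\<exists>u. u \<in> V \<and> {v, u} \<in> E \<and> d u < d v"
      using m by (intro exI[of _ u]) simp
  qed
  then obtain p where "\<forall>v\<in>V - {r}. p v \<in> V \<and> {v, p v} \<in> E \<and> d (p v) < d v"
    by (metis bchoice)
  then show ?thesis by (intro exI[of _ p] exI[of _ d])
qed

lemma parent_edges_reach:
  fixes d :: "'a \<Rightarrow> nat"
  assumes parent: "\<forall>v\<in>V - {r}. p v \<in> V \<and> {v, p v} \<in> E \<and> d (p v) < d v" and "v \<in> V"
  shows "(adj E)\<^sup>*\<^sup>* r v"
  using \<open>v \<in> V\<close>
proof (induction "d v" arbitrary: v rule: less_induct)
  case less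
  show ?case
  proof (cases "v = r")
    case False
    then have "p v \<in> V" "{v, p v} \<in> E" "d (p v) < d v" using parent less.prems by auto
    then have "(adj E)\<^sup>*\<^sup>* r (p v)" "adj E (p v) v"
      using less.hyps by (auto simp: adj_def insert_commute)
    then show ?thesis by (rule rtranclp.rtrancl_into_rtrancl)
  qed simp
qed

text \<open>Every edge of a tree is a parent edge: otherwise the parent edges alone would
  still connect its endpoints, contradicting that it is a bridge.\<close>
lemma tree_eq_parent_edges:
  assumes tree: "is_tree V T" and r: "r \<in> V"
  shows "\<exists>p. T = (\<lambda>v. {v, p v}) ` (V - {r})"
proof -
  have sg: "simple_graph V T" and acyclic: "\<not> has_cycle V T"
    using tree unfolding is_tree_def by auto
  obtain p and d :: "'a \<Rightarrow> nat"
    where parent: "\<forall>v\<in>V - {r}. p v \<in> V \<and> {v, p v} \<in> T \<and> d (p v) < d v"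
    using connected_graph_ex_parent[OF sg _ r] tree unfolding is_tree_def by blast
  have "e \<in> (\<lambda>v. {v, p v}) ` (V - {r})" if e: "e \<in> T" for e
  proof (rule ccontr)
    assume not_parent: "e \<notin> (\<lambda>v. {v, p v}) ` (V - {r})"
    obtain x y where "e = {x, y}" "x \<in> V" "y \<in> V"
      using sg e unfolding simple_graph_def by blast
    have "\<forall>v\<in>V - {r}. p v \<in> V \<and> {v, p v} \<in> T - {e} \<and> d (p v) < d v"
      using parent not_parent by auto
    note reach = parent_edges_reach[OF this]
    have "(adj (T - {e}))\<^sup>*\<^sup>* r x" "(adj (T - {e}))\<^sup>*\<^sup>* r y"
      using reach \<open>x \<in> V\<close> \<open>y \<in> V\<close> by blast+
    then have "(adj (T - {e}))\<^sup>*\<^sup>* x y"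
      by (meson rtranclp_trans symp_adj symp_rtranclp sympD)
    then show False using acyclic_edge_is_bridge[OF sg acyclic] e \<open>e = {x, y}\<close> by blast
  qed
  moreover have "(\<lambda>v. {v, p v}) ` (V - {r}) \<subseteq> T" using parent by auto
  ultimately show ?thesis by blast
qed

lemma graph_iso_refl: "graph_iso V E V E"
  unfolding graph_iso_def by (intro exI[of _ id]) auto

lemma graph_iso_sym:
  assumes "graph_iso V1 E1 V2 E2"
  shows "graph_iso V2 E2 V1 E1"
proof -
  obtain f where f: "bij_betw f V1 V2" "\<forall>u\<in>V1. \<forall>v\<in>V1. {u, v} \<in> E1 \<longleftrightarrow> {f u, f v} \<in> E2"
    using assms unfolding graph_iso_def by blast
  let ?g = "inv_into V1 f"
  have "?g u \<in> V1" "f (?g u) = u" if "u \<in> V2" for u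
    using f(1) that by (auto simp: bij_betw_inv_into_right bij_betw_apply[OF bij_betw_inv_into])
  then have "\<forall>u\<in>V2. \<forall>v\<in>V2. {u, v} \<in> E2 \<longleftrightarrow> {?g u, ?g v} \<in> E1"
    using f(2) by metis
  then show ?thesis unfolding graph_iso_def using bij_betw_inv_into[OF f(1)] by blast
qed

lemma graph_iso_trans:
  assumes "graph_iso V1 E1 V2 E2" and "graph_iso V2 E2 V3 E3"
  shows "graph_iso V1 E1 V3 E3"
proof -
  obtain f where f: "bij_betw f V1 V2" "\<forall>u\<in>V1. \<forall>v\<in>V1. {u, v} \<in> E1 \<longleftrightarrow> {f u, f v} \<in> E2"
    using assms(1) unfolding graph_iso_def by blast
  obtain g where g: "bij_betw g V2 V3" "\<forall>u\<in>V2. \<forall>v\<in>V2. {u, v} \<in> E2 \<longleftrightarrow> {g u, g v} \<in> E3"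
    using assms(2) unfolding graph_iso_def by blast
  have "\<forall>u\<in>V1. \<forall>v\<in>V1. {u, v} \<in> E1 \<longleftrightarrow> {g (f u), g (f v)} \<in> E3"
    using f g by (simp add: bij_betw_apply)
  then show ?thesis unfolding graph_iso_def using bij_betw_trans[OF f(1) g(1)] by auto
qed

lemma graph_iso_image:
  assumes f: "bij_betw f V W" and E: "\<Union>E \<subseteq> V"
  shows "graph_iso V E W ((`) f ` E)"
  unfolding graph_iso_def
proof (intro exI[of _ f] conjI ballI iffI)
  fix u v assume "u \<in> V" "v \<in> V"
  show "{f u, f v} \<in> (`) f ` E" if "{u, v} \<in> E"
    using that by (intro image_eqI[of _ _ "{u, v}"]) simp_all
  assume "{f u, f v} \<in> (`) f ` E"
  then obtain e where e: "e \<in> E" "f ` {u, v} = f ` e" by auto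
  have "{u, v} = e"
  proof (rule inj_on_image_eq_iff[OF bij_betw_imp_inj_on[OF f], THEN iffD1])
    show "{u, v} \<subseteq> V" "e \<subseteq> V" using E \<open>u \<in> V\<close> \<open>v \<in> V\<close> e(1) by auto
  qed (fact e(2))
  then show "{u, v} \<in> E" using e(1) by simp
qed (fact f)

lemma equiv_tree_iso_rel: "equiv (spanning_trees_Kab a b) (tree_iso_rel a b)"
  unfolding equiv_def refl_on_def sym_def trans_def tree_iso_rel_def
  using graph_iso_refl graph_iso_sym graph_iso_trans by blast

lemma Kab_edge_InlD: "{Inl i, w} \<in> Kab_edges a b \<Longrightarrow> \<exists>j<b. w = Inr j"
  unfolding Kab_edges_def by (auto simp: doubleton_eq_iff)

lemma Kab_edge_InrD: "{Inr j, w} \<in> Kab_edges a b \<Longrightarrow> \<exists>i<a. w = Inl i"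
  unfolding Kab_edges_def by (auto simp: doubleton_eq_iff)

text \<open>Inl 0 is the root; G and H give the parents of the other vertices on the left and
  on the right.\<close>
definition Kab_parent_tree ::
    "nat \<Rightarrow> nat \<Rightarrow> (nat \<Rightarrow> nat) \<Rightarrow> (nat \<Rightarrow> nat) \<Rightarrow> (nat + nat) set set"
  where "Kab_parent_tree a b G H =
    (\<lambda>i. {Inl i, Inr (G i)}) ` {1..<a} \<union> (\<lambda>j. {Inr j, Inl (H j)}) ` {..<b}"

lemma spanning_tree_eq_Kab_parent_tree:
  assumes T: "T \<in> spanning_trees_Kab a b" and "0 < a"
  shows "\<exists>G H. (\<forall>i\<in>{1..<a}. G i < b) \<and> (\<forall>j<b. H j < a) \<and> T = Kab_parent_tree a b G H"
proof -
  have root: "Inl 0 \<in> Kab_verts a b" using \<open>0 < a\<close> by (simp add: Kab_verts_def)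
  have non_root: "Kab_verts a b - {Inl 0} = Inl ` {1..<a} \<union> Inr ` {..<b}"
    by (auto simp: Kab_verts_def image_iff)
  obtain p where p: "T = (\<lambda>v. {v, p v}) ` (Kab_verts a b - {Inl 0})"
    using tree_eq_parent_edges[OF _ root] T unfolding spanning_trees_Kab_def by blast
  have edge: "{v, p v} \<in> Kab_edges a b" if "v \<in> Kab_verts a b - {Inl 0}" for v
    using T that unfolding p spanning_trees_Kab_def by blast
  have left: "\<exists>j<b. p (Inl i) = Inr j" if "i \<in> {1..<a}" for i
    using that edge[of "Inl i"] Kab_edge_InlD unfolding non_root by blast
  have right: "\<exists>i<a. p (Inr j) = Inl i" if "j < b" for j
    using that edge[of "Inr j"] Kab_edge_InrD unfolding non_root by blast
  define G where "G i = projr (p (Inl i))" for i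
  define H where "H j = projl (p (Inr j))" for j
  have G: "p (Inl i) = Inr (G i) \<and> G i < b" if "i \<in> {1..<a}" for i
    using left[OF that] unfolding G_def by auto
  have H: "p (Inr j) = Inl (H j) \<and> H j < a" if "j < b" for j
    using right[OF that] unfolding H_def by auto
  have "T = (\<lambda>i. {Inl i, p (Inl i)}) ` {1..<a} \<union> (\<lambda>j. {Inr j, p (Inr j)}) ` {..<b}"
    unfolding p non_root image_Un image_image ..
  also have "\<dots> = Kab_parent_tree a b G H"
    unfolding Kab_parent_tree_def using G H by (auto intro!: image_cong)
  finally show ?thesis using G H by blast
qed

lemma bij_betw_map_sum_Kab_verts:
  assumes "bij_betw \<sigma> {..<b} {..<b}"
  shows "bij_betw (map_sum id \<sigma>) (Kab_verts a b) (Kab_verts a b)"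
proof -
  have "inj_on \<sigma> {..<b}" "\<sigma> ` {..<b} = {..<b}" using assms by (auto simp: bij_betw_def)
  then show ?thesis
    unfolding bij_betw_def Kab_verts_def inj_on_def image_Un image_image by auto
qed

lemma Kab_parent_tree_relabel:
  assumes \<sigma>: "bij_betw \<sigma> {..<b} {..<b}" and H': "\<forall>j<b. H' (\<sigma> j) = H j"
  shows "(`) (map_sum id \<sigma>) ` Kab_parent_tree a b G H = Kab_parent_tree a b (\<sigma> \<circ> G) H'"
proof -
  have "(\<lambda>j. {Inr (\<sigma> j), Inl (H j)}) ` {..<b} = (\<lambda>j. {Inr j, Inl (H' j)}) ` (\<sigma> ` {..<b})"
    unfolding image_image using H' by (auto intro!: image_cong)
  also have "\<sigma> ` {..<b} = {..<b}" using \<sigma> by (simp add: bij_betw_def)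
  finally show ?thesis unfolding Kab_parent_tree_def image_Un image_image by simp
qed

lemma ex_inj_on_label_le_first_occurrence:
  fixes G :: "nat \<Rightarrow> 'a"
  shows "\<exists>\<sigma> :: 'a \<Rightarrow> nat. inj_on \<sigma> (G ` {..<n}) \<and> (\<forall>i<n. \<sigma> (G i) \<le> i)"
proof (induction n)
  case 0
  show ?case by simp
next
  case (Suc n)
  then obtain \<sigma> :: "'a \<Rightarrow> nat" where inj: "inj_on \<sigma> (G ` {..<n})" and le: "\<forall>i<n. \<sigma> (G i) \<le> i"
    by blast
  show ?case
  proof (cases "G n \<in> G ` {..<n}")
    case True
    then have "G ` {..<Suc n} = G ` {..<n}" by (auto simp: lessThan_Suc)
    moreover have "\<sigma> (G n) \<le> n" using True le by fastforce
    ultimately show ?thesis using inj le by (intro exI[of _ \<sigma>]) (simp add: less_Suc_eq)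
  next
    case False
    let ?\<sigma> = "\<sigma>(G n := n)"
    have "n \<notin> \<sigma> ` G ` {..<n}" using le by fastforce
    moreover have "inj_on ?\<sigma> (G ` {..<n})"
      using inj False by (metis fun_upd_other inj_on_cong)
    ultimately have "inj_on ?\<sigma> (G ` {..<Suc n})"
      using False by (auto simp: lessThan_Suc)
    moreover have "\<forall>i<Suc n. ?\<sigma> (G i) \<le> i"
      using le False by (auto simp: less_Suc_eq image_iff dest: sym)
    ultimately show ?thesis by blast
  qed
qed

lemma inj_on_extend_bij_betw:
  assumes "finite B" and "A \<subseteq> B" and inj: "inj_on f A" and "f ` A \<subseteq> B"
  shows "\<exists>g. bij_betw g B B \<and> (\<forall>x\<in>A. g x = f x)"
proof -
  have "finite A" using assms(1,2) by (rule finite_subset[rotated])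
  then have "card (B - A) = card (B - f ` A)"
    using assms by (simp add: card_Diff_subset card_image)
  then obtain h where h: "bij_betw h (B - A) (B - f ` A)"
    using finite_same_card_bij assms(1) by blast
  define g where "g x = (if x \<in> A then f x else h x)" for x
  have "bij_betw g A (f ` A)" unfolding bij_betw_def g_def using inj by (auto simp: inj_on_def)
  moreover have "bij_betw g (B - A) (B - f ` A)"
    using h by (rule bij_betw_cong[THEN iffD1, rotated]) (simp add: g_def)
  ultimately have "bij_betw g (A \<union> (B - A)) (f ` A \<union> (B - f ` A))"
    by (rule bij_betw_combine) blast
  moreover have "A \<union> (B - A) = B" "f ` A \<union> (B - f ` A) = B" using assms by auto
  ultimately show ?thesis by (intro exI[of _ g]) (simp add: g_def)
qed

lemma ex_bij_betw_label_less:
  fixes a b :: nat and G :: "nat \<Rightarrow> nat"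
  assumes G: "\<forall>i\<in>{1..<a}. G i < b" and "a \<le> b"
  shows "\<exists>\<sigma>. bij_betw \<sigma> {..<b} {..<b} \<and> (\<forall>i\<in>{1..<a}. \<sigma> (G i) < i)"
proof -
  obtain \<sigma> :: "nat \<Rightarrow> nat" where inj: "inj_on \<sigma> ((\<lambda>k. G (Suc k)) ` {..<a - 1})"
    and le: "\<forall>k<a - 1. \<sigma> (G (Suc k)) \<le> k"
    using ex_inj_on_label_le_first_occurrence[of "\<lambda>k. G (Suc k)" "a - 1"] by blast
  have "Suc ` {..<a - 1} = {1..<a}" by (cases a) (simp_all add: lessThan_atLeast0)
  then have shift: "(\<lambda>k. G (Suc k)) ` {..<a - 1} = G ` {1..<a}"
    by (simp add: image_image[symmetric])
  have less: "\<forall>i\<in>{1..<a}. \<sigma> (G i) < i"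
  proof
    fix i assume "i \<in> {1..<a}"
    then show "\<sigma> (G i) < i"
      using le[rule_format, of "i - 1"] by (simp add: less_diff_conv2 le_diff_conv2)
  qed
  have "\<sigma> ` G ` {1..<a} \<subseteq> {..<b}" using less \<open>a \<le> b\<close> by fastforce
  then obtain g where "bij_betw g {..<b} {..<b}" "\<forall>x\<in>G ` {1..<a}. g x = \<sigma> x"
    using inj_on_extend_bij_betw[of "{..<b}" "G ` {1..<a}" \<sigma>] inj G unfolding shift by auto
  then show ?thesis using less by (intro exI[of _ g]) auto
qed

definition canonical_codes :: "nat \<Rightarrow> nat \<Rightarrow> ((nat \<Rightarrow> nat) \<times> (nat \<Rightarrow> nat)) set" where
  "canonical_codes a b = (\<Pi>\<^sub>E i\<in>{1..<a}. {..<i}) \<times> (\<Pi>\<^sub>E j\<in>{..<b}. {..<a})"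

lemma finite_canonical_codes: "finite (canonical_codes a b)"
  unfolding canonical_codes_def by (simp add: finite_PiE)

lemma card_canonical_codes_le:
  assumes "2 \<le> a"
  shows "card (canonical_codes a b) \<le> a ^ (a + b - 2)"
proof -
  have "card (canonical_codes a b) = (\<Prod>i\<in>{1..<a}. i) * a ^ b"
    unfolding canonical_codes_def by (simp add: card_cartesian_product card_PiE)
  also have "(\<Prod>i\<in>{1..<a}. i) = (\<Prod>i\<in>{2..<a}. i)"
    using assms by (simp add: prod.atLeast_Suc_lessThan numeral_2_eq_2)
  also have "\<dots> \<le> a ^ (a - 2)"
    using prod_mono[of "{2..<a}" "\<lambda>i. i" "\<lambda>_. a"] by simp
  finally show ?thesis
    using assms by (simp add: power_add[symmetric])
qed

lemma spanning_tree_iso_canonical: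
  assumes T: "T \<in> spanning_trees_Kab a b" and "0 < a" "a \<le> b"
  shows "\<exists>(G, H)\<in>canonical_codes a b.
    graph_iso (Kab_verts a b) T (Kab_verts a b) (Kab_parent_tree a b G H)"
proof -
  obtain G H where G: "\<forall>i\<in>{1..<a}. G i < b" and H: "\<forall>j<b. H j < a"
    and T_eq: "T = Kab_parent_tree a b G H"
    using spanning_tree_eq_Kab_parent_tree[OF T \<open>0 < a\<close>] by blast
  obtain \<sigma> where \<sigma>: "bij_betw \<sigma> {..<b} {..<b}" and less: "\<forall>i\<in>{1..<a}. \<sigma> (G i) < i"
    using ex_bij_betw_label_less[OF G \<open>a \<le> b\<close>] by blast
  define H' where "H' = H \<circ> inv_into {..<b} \<sigma>"
  have H': "\<forall>j<b. H' (\<sigma> j) = H j"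
    unfolding H'_def using \<sigma> by (simp add: bij_betw_inv_into_left)
  have H'_less: "\<forall>j<b. H' j < a"
    unfolding H'_def using H bij_betw_apply[OF bij_betw_inv_into[OF \<sigma>]] by simp
  have "\<Union>T \<subseteq> Kab_verts a b"
    using T simple_graph_edge_subset unfolding spanning_trees_Kab_def is_tree_def by blast
  then have "graph_iso (Kab_verts a b) T (Kab_verts a b) (Kab_parent_tree a b (\<sigma> \<circ> G) H')"
    using graph_iso_image[OF bij_betw_map_sum_Kab_verts[OF \<sigma>]] Kab_parent_tree_relabel[OF \<sigma> H']
    unfolding T_eq by metis
  moreover have "Kab_parent_tree a b (\<sigma> \<circ> G) H' =
      Kab_parent_tree a b (restrict (\<sigma> \<circ> G) {1..<a}) (restrict H' {..<b})"
    unfolding Kab_parent_tree_def by (auto intro!: image_cong)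
  moreover have "(restrict (\<sigma> \<circ> G) {1..<a}, restrict H' {..<b}) \<in> canonical_codes a b"
    unfolding canonical_codes_def using less H'_less by auto
  ultimately show ?thesis by fastforce
qed

lemma card_quotient_le_card:
  assumes "equiv A R" and "finite C"
    and ex: "\<And>x. x \<in> A \<Longrightarrow> \<exists>c\<in>C. P x c"
    and uniq: "\<And>x y c. x \<in> A \<Longrightarrow> y \<in> A \<Longrightarrow> P x c \<Longrightarrow> P y c \<Longrightarrow> (x, y) \<in> R"
  shows "card (A // R) \<le> card C"
proof -
  define code where "code X = (SOME c. c \<in> C \<and> (\<exists>x\<in>X. P x c))" for X
  have code: "code X \<in> C \<and> (\<exists>x\<in>X. P x (code X))" if "X \<in> A // R" for X
  proof -
    obtain x where "x \<in> A" "X = R `` {x}" using \<open>X \<in> A // R\<close> by (rule quotientE)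
    moreover have "x \<in> R `` {x}" using \<open>equiv A R\<close> \<open>x \<in> A\<close> by (rule equiv_class_self)
    ultimately have "\<exists>c. c \<in> C \<and> (\<exists>x\<in>X. P x c)" using ex by blast
    then show ?thesis unfolding code_def by (rule someI_ex)
  qed
  have "inj_on code (A // R)"
  proof (rule inj_onI)
    fix X Y assume X: "X \<in> A // R" and Y: "Y \<in> A // R" and "code X = code Y"
    then obtain x y where "x \<in> X" "y \<in> Y" "P x (code X)" "P y (code X)" using code by metis
    moreover have "X \<subseteq> A" "Y \<subseteq> A" using X Y \<open>equiv A R\<close> by (auto dest: in_quotient_imp_subset)
    ultimately have "(x, y) \<in> R" using uniq by blast
    then show "X = Y" using quotient_eqI[OF \<open>equiv A R\<close> X Y \<open>x \<in> X\<close> \<open>y \<in> Y\<close>] by blast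
  qed
  moreover have "code ` (A // R) \<subseteq> C" using code by blast
  ultimately show ?thesis using \<open>finite C\<close> by (rule card_inj_on_le)
qed

theorem theorem2p6:
  fixes a b :: nat
  assumes "2 \<le> a" and "a < b"
  shows "I_count a b \<le> a ^ (a + b - 2)"
proof -
  let ?V = "Kab_verts a b"
  let ?iso_to_code = "\<lambda>T (G, H). graph_iso ?V T ?V (Kab_parent_tree a b G H)"
  have "I_count a b \<le> card (canonical_codes a b)"
    unfolding I_count_def
  proof (rule card_quotient_le_card[OF equiv_tree_iso_rel finite_canonical_codes,
        where P = ?iso_to_code])
    fix T assume "T \<in> spanning_trees_Kab a b"
    then show "\<exists>c\<in>canonical_codes a b. ?iso_to_code T c"
      using spanning_tree_iso_canonical assms by simp
  next
    fix T T' c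
    assume "T \<in> spanning_trees_Kab a b" "T' \<in> spanning_trees_Kab a b"
      and "?iso_to_code T c" "?iso_to_code T' c"
    then show "(T, T') \<in> tree_iso_rel a b"
      unfolding tree_iso_rel_def by (auto intro: graph_iso_trans graph_iso_sym split: prod.splits)
  qed
  also have "\<dots> \<le> a ^ (a + b - 2)" using card_canonical_codes_le[OF assms(1)] .
  finally show ?thesis .
qed

end
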